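(* Let $n=2k+1$ with $k$ a positive integer, and let $(\Gamma,+)$ be an abelian group of order $n$ with neutral element $e$ such that $\sum_{g\in\Gamma} g = e$ and $2g\neq e$ for all $g\in\Gamma\setminus\{e\}$. Let $p,q$ be two new symbols and let $P_n=(\Gamma\times(\Gamma\setminus\{e\}))\cup\{p,q\}$. Define the lines - $L_g=\{(h,g): h\in\Gamma\}$ for $g\in\Gamma\setminus\{e\}$; - $l_{p_g}=\{(g,h): h\in\Gamma\setminus\{e\}\}\cup\{p\}$ for $g\in\Gamma$; - $l_{q_g}=\{(h,h+g): h\in\Gamma,\ h+g\neq e\}\cup\{q\}$ for $g\in\Gamma$, and let $\mathcal{L}_n$ be the family of all these $3n-1$ lines. Then the linear system $\mathcal{C}_{n,n+1}=(P_n,\mathcal{L}_n)$ satisfies $\nu_2(\mathcal{C}_{n,n+1})=n+1$.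
   Context: A linear system is a pair $(P,\mathcal{L})$ with $P$ a finite set of points and $\mathcal{L}$ a family of subsets of $P$ (lines) such that any two distinct lines share at most one point. A 2-packing is a set $R$ of lines such that no three distinct lines of $R$ have a common point; $\nu_2$ denotes the maximum cardinality of a 2-packing. *)

theory Defs
  imports Main
begin

definition linear_system :: "'p set \<Rightarrow> 'p set set \<Rightarrow> bool" where
  "linear_system P L \<longleftrightarrow> finite P \<and> (\<forall>l\<in>L. l \<subseteq> P) \<and>
     (\<forall>l1\<in>L. \<forall>l2\<in>L. l1 \<noteq> l2 \<longrightarrow> card (l1 \<inter> l2) \<le> 1)"

definition two_packing :: "'p set set \<Rightarrow> 'p set set \<Rightarrow> bool" where
  "two_packing L R \<longleftrightarrow> R \<subseteq> L \<and>
     (\<forall>l1\<in>R. \<forall>l2\<in>R. \<forall>l3\<in>R. l1 \<noteq> l2 \<and> l1 \<noteq> l3 \<and> l2 \<noteq> l3 \<longrightarrow>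
        l1 \<inter> l2 \<inter> l3 = {})"

definition nu2 :: "'p set set \<Rightarrow> nat" where
  "nu2 L = Max (card ` {R. two_packing L R})"

datatype 'a pt = Pt 'a 'a | PP | QQ

definition Cpoints :: "('a::ab_group_add) pt set" where
  "Cpoints = {Pt h g | h g. g \<noteq> 0} \<union> {PP, QQ}"

definition lineL :: "'a::ab_group_add \<Rightarrow> 'a pt set" where
  "lineL g = {Pt h g | h. True}"

definition lineP :: "'a::ab_group_add \<Rightarrow> 'a pt set" where
  "lineP g = {Pt g h | h. h \<noteq> 0} \<union> {PP}"

definition lineQ :: "'a::ab_group_add \<Rightarrow> 'a pt set" where
  "lineQ g = {Pt h (h + g) | h. h + g \<noteq> 0} \<union> {QQ}"

definition Clines :: "('a::ab_group_add) pt set set" where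
  "Clines = {lineL g | g. g \<noteq> 0} \<union> {lineP g | g. True} \<union> {lineQ g | g. True}"

end

theory Submission
  imports Defs "HOL-Library.Set_Algebras"
begin

text \<open>Every point of C_{n,n+1} other than p and q lies on exactly three lines, one of each
  family, and p and q lie on the lines of one family each. Hence a 2-packing contains at most
  two lines l_{p_a}, a \<in> A, and two lines l_{q_c}, c \<in> B; the point (a, a + c) forbids L_{a+c}
  for every non-zero a + c in the sumset A + B, and since \<Gamma> has no element of order 2, a
  sumset of sets of size at most two has at least |A| + |B| - 1 elements. Counting gives at
  most n + 1 lines. Conversely all the lines L_g together with two lines l_{q_g} form a
  2-packing of that size.\<close>

lemma two_packing_iff_card_lines_through:
  assumes "finite R"
  shows "two_packing L R \<longleftrightarrow> R \<subseteq> L \<and> (\<forall>x. card {l \<in> R. x \<in> l} \<le> 2)"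
proof -
  have "(\<forall>l1\<in>R. \<forall>l2\<in>R. \<forall>l3\<in>R. l1 \<noteq> l2 \<and> l1 \<noteq> l3 \<and> l2 \<noteq> l3 \<longrightarrow> l1 \<inter> l2 \<inter> l3 = {})
      \<longleftrightarrow> (\<forall>x. card {l \<in> R. x \<in> l} \<le> 2)"
  proof (intro iffI allI)
    fix x
    assume packing: "\<forall>l1\<in>R. \<forall>l2\<in>R. \<forall>l3\<in>R. l1 \<noteq> l2 \<and> l1 \<noteq> l3 \<and> l2 \<noteq> l3 \<longrightarrow> l1 \<inter> l2 \<inter> l3 = {}"
    show "card {l \<in> R. x \<in> l} \<le> 2"
    proof (rule ccontr)
      assume "\<not> card {l \<in> R. x \<in> l} \<le> 2"
      then obtain T where "T \<subseteq> {l \<in> R. x \<in> l}" "card T = 3"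
        using obtain_subset_with_card_n[of 3 "{l \<in> R. x \<in> l}"] by auto
      then obtain l1 l2 l3 where "l1 \<in> R" "l2 \<in> R" "l3 \<in> R" "l1 \<noteq> l2 \<and> l1 \<noteq> l3 \<and> l2 \<noteq> l3"
          "x \<in> l1 \<inter> l2 \<inter> l3"
        unfolding card_3_iff by auto
      then show False
        using packing by blast
    qed
  next
    assume few: "\<forall>x. card {l \<in> R. x \<in> l} \<le> 2"
    show "\<forall>l1\<in>R. \<forall>l2\<in>R. \<forall>l3\<in>R. l1 \<noteq> l2 \<and> l1 \<noteq> l3 \<and> l2 \<noteq> l3 \<longrightarrow> l1 \<inter> l2 \<inter> l3 = {}"
    proof (intro ballI impI equals0I)
      fix l1 l2 l3 x
      assume "l1 \<in> R" "l2 \<in> R" "l3 \<in> R" and distinct: "l1 \<noteq> l2 \<and> l1 \<noteq> l3 \<and> l2 \<noteq> l3"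
        and "x \<in> l1 \<inter> l2 \<inter> l3"
      then have "card {l1, l2, l3} \<le> card {l \<in> R. x \<in> l}"
        using assms by (intro card_mono) auto
      moreover have "card {l1, l2, l3} = 3"
        using distinct by simp
      ultimately show False
        using few[rule_format, of x] by simp
    qed
  qed
  then show ?thesis
    unfolding two_packing_def by simp
qed

lemma two_packing_card_pencil_le:
  assumes "two_packing L R" "finite R" "inj f" "\<And>g. x \<in> f g"
  shows "card {g. f g \<in> R} \<le> 2"
proof -
  have "card {g. f g \<in> R} = card (f ` {g. f g \<in> R})"
    using assms(3) by (simp add: card_image inj_on_subset)
  also have "\<dots> \<le> card {l \<in> R. x \<in> l}"
    using assms(2,4) by (intro card_mono) auto
  also have "\<dots> \<le> 2"
    using assms(1,2) two_packing_iff_card_lines_through by blast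
  finally show ?thesis .
qed

lemma nu2_eqI:
  assumes "finite L" "two_packing L R" "card R = m"
    and "\<And>R'. two_packing L R' \<Longrightarrow> card R' \<le> m"
  shows "nu2 L = m"
  unfolding nu2_def
proof (rule Max_eqI)
  have "{R. two_packing L R} \<subseteq> Pow L"
    by (auto simp: two_packing_def)
  then show "finite (card ` {R. two_packing L R})"
    using assms(1) by (meson finite_Pow_iff finite_imageI finite_subset)
qed (use assms in auto)

lemma card_sums_of_pairs_ge_3:
  fixes a1 a2 b1 b2 :: "'a::ab_group_add"
  assumes "a1 \<noteq> a2" "b1 \<noteq> b2" "\<forall>g::'a. g \<noteq> 0 \<longrightarrow> g + g \<noteq> 0"
  shows "3 \<le> card {a1 + b1, a1 + b2, a2 + b1, a2 + b2}"
proof (cases "a1 + b2 = a2 + b1")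
  case True
  have "a1 + b1 \<noteq> a2 + b2"
  proof
    assume "a1 + b1 = a2 + b2"
    have "(b1 - b2) + (b1 - b2) = (a1 + b1) - (a2 + b2) + ((a2 + b1) - (a1 + b2))"
      by (simp add: algebra_simps)
    with True \<open>a1 + b1 = a2 + b2\<close> have "(b1 - b2) + (b1 - b2) = 0"
      by simp
    then show False
      using assms(2) assms(3)[rule_format, of "b1 - b2"] by simp
  qed
  then have "card {a1 + b1, a1 + b2, a2 + b2} = 3"
    using assms(1,2) by auto
  moreover have "card {a1 + b1, a1 + b2, a2 + b2} \<le> card {a1 + b1, a1 + b2, a2 + b1, a2 + b2}"
    by (intro card_mono) auto
  ultimately show ?thesis
    by simp
next
  case False
  then have "card {a1 + b1, a1 + b2, a2 + b1} = 3"
    using assms(1,2) by auto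
  moreover have "card {a1 + b1, a1 + b2, a2 + b1} \<le> card {a1 + b1, a1 + b2, a2 + b1, a2 + b2}"
    by (intro card_mono) auto
  ultimately show ?thesis
    by simp
qed

lemma card_sumset_ge:
  fixes A B :: "'a::ab_group_add set"
  assumes "A \<noteq> {}" "B \<noteq> {}" "finite A" "finite B" "card A \<le> 2" "card B \<le> 2"
    and "\<forall>g::'a. g \<noteq> 0 \<longrightarrow> g + g \<noteq> 0"
  shows "card A + card B \<le> card (A + B) + 1"
proof -
  have "card A > 0" "card B > 0"
    using assms(1-4) by (simp_all add: card_gt_0_iff)
  then have "card A = 1 \<or> card A = 2" "card B = 1 \<or> card B = 2"
    using assms(5,6) by auto
  then consider a where "A = {a}" | b where "B = {b}"
    | a1 a2 b1 b2 where "A = {a1, a2}" "a1 \<noteq> a2" "B = {b1, b2}" "b1 \<noteq> b2"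
    by (metis One_nat_def card_1_singletonE card_2_iff)
  then show ?thesis
  proof cases
    case 1
    then show ?thesis
      using assms(5) by (simp add: add.commute[of "{a}" B] card_plus_sing)
  next
    case 2
    then show ?thesis
      using assms(6) by (simp add: card_plus_sing)
  next
    case 3
    then have "A + B = {a1 + b1, a1 + b2, a2 + b1, a2 + b2}"
      by (auto simp: set_plus_def)
    then show ?thesis
      using 3 card_sums_of_pairs_ge_3[of a1 a2 b1 b2] assms(7) by simp
  qed
qed

lemma mem_lineL [simp]: "Pt a b \<in> lineL g \<longleftrightarrow> b = g" "PP \<notin> lineL g" "QQ \<notin> lineL g"
  by (auto simp: lineL_def)

lemma mem_lineP [simp]: "Pt a b \<in> lineP g \<longleftrightarrow> a = g \<and> b \<noteq> 0" "PP \<in> lineP g" "QQ \<notin> lineP g"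
  by (auto simp: lineP_def)

lemma mem_lineQ [simp]: "Pt a b \<in> lineQ g \<longleftrightarrow> b = a + g \<and> b \<noteq> 0" "PP \<notin> lineQ g" "QQ \<in> lineQ g"
  by (auto simp: lineQ_def)

lemma mem_Cpoints [simp]: "Pt a b \<in> Cpoints \<longleftrightarrow> b \<noteq> 0" "PP \<in> Cpoints" "QQ \<in> Cpoints"
  by (auto simp: Cpoints_def)

lemma line_families_distinct [simp]:
  "lineL g \<noteq> lineP h" "lineP h \<noteq> lineL g" "lineL g \<noteq> lineQ h" "lineQ h \<noteq> lineL g"
  "lineP g \<noteq> lineQ h" "lineQ h \<noteq> lineP g"
  by (metis mem_lineL(2,3) mem_lineP(2,3) mem_lineQ(2,3))+

lemma inj_lineL: "inj lineL"
  by (rule injI) (metis mem_lineL(1))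

lemma inj_lineP: "inj lineP"
proof (rule injI)
  fix g h :: 'a
  assume eq: "lineP g = lineP h"
  show "g = h"
  proof (cases "\<exists>x::'a. x \<noteq> 0")
    case True
    then obtain x :: 'a where "x \<noteq> 0" by blast
    then have "Pt g x \<in> lineP h"
      using eq[symmetric] by simp
    then show ?thesis by simp
  qed metis
qed

lemma inj_lineQ: "inj lineQ"
proof (rule injI)
  fix g h :: 'a
  assume eq: "lineQ g = lineQ h"
  show "g = h"
  proof (cases "\<exists>x::'a. x \<noteq> 0")
    case True
    then obtain x :: 'a where "x \<noteq> 0" by blast
    then have "Pt (x - g) x \<in> lineQ h"
      using eq[symmetric] by simp
    then show ?thesis by simp
  qed metis
qed

lemma Clines_eq: "Clines = lineL ` {g. g \<noteq> 0} \<union> range lineP \<union> range lineQ"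
  by (auto simp: Clines_def)

lemma lines_through_Pt:
  assumes "l \<in> Clines" "Pt a b \<in> l"
  shows "l \<in> {lineL b, lineP a, lineQ (b - a)}"
  using assms by (auto simp: Clines_eq algebra_simps)

lemma Clines_meet_at_most_once:
  assumes "l1 \<in> Clines" "l2 \<in> Clines" "l1 \<noteq> l2" "x \<in> l1 \<inter> l2" "y \<in> l1 \<inter> l2"
  shows "x = y"
  using assms by (cases x; cases y) (auto simp: Clines_eq)

lemma linear_system_Cpoints_Clines: "linear_system (Cpoints :: ('a::{ab_group_add, finite}) pt set) Clines"
proof -
  have "(Cpoints :: 'a pt set) \<subseteq> range (case_prod Pt) \<union> {PP, QQ}"
    by (auto simp: Cpoints_def)
  then have fin: "finite (Cpoints :: 'a pt set)"
    by (rule finite_subset) simp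
  moreover have sub: "l \<subseteq> Cpoints" if "l \<in> (Clines :: 'a pt set set)" for l
  proof
    fix x assume "x \<in> l"
    with that show "x \<in> Cpoints"
      by (cases x) (auto simp: Clines_eq)
  qed
  moreover have "card (l1 \<inter> l2) \<le> 1"
    if "l1 \<in> Clines" "l2 \<in> Clines" "l1 \<noteq> l2" for l1 l2 :: "'a pt set"
  proof -
    have "finite (l1 \<inter> l2)"
      using finite_subset[OF sub[OF that(1)] fin] by simp
    then show ?thesis
      using Clines_meet_at_most_once[OF that] card_le_Suc0_iff_eq[of "l1 \<inter> l2"] by auto
  qed
  ultimately show ?thesis
    unfolding linear_system_def by blast
qed

lemma two_packing_Clines_lineL_sum:
  assumes "two_packing Clines R" "lineP a \<in> R" "lineQ c \<in> R" "a + c \<noteq> 0"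
  shows "lineL (a + c) \<notin> R"
proof
  assume "lineL (a + c) \<in> R"
  then have "lineL (a + c) \<inter> lineP a \<inter> lineQ c = {}"
    using assms(1-3) unfolding two_packing_def by simp
  moreover have "Pt a (a + c) \<in> lineL (a + c) \<inter> lineP a \<inter> lineQ c"
    using assms(4) by simp
  ultimately show False
    by blast
qed

lemma two_packing_Clines_card_le:
  fixes R :: "('a::{ab_group_add, finite}) pt set set"
  assumes packing: "two_packing Clines R" and no_two_torsion: "\<forall>g::'a. g \<noteq> 0 \<longrightarrow> g + g \<noteq> 0"
  shows "card R \<le> card (UNIV :: 'a set) + 1"
proof -
  define S where "S = {g. g \<noteq> 0 \<and> lineL g \<in> R}"
  define A where "A = {g. lineP g \<in> R}"
  define B where "B = {g. lineQ g \<in> R}"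
  have "finite R"
    using packing finite_subset[of R Clines] by (auto simp: two_packing_def Clines_eq)
  have "R \<subseteq> lineL ` S \<union> lineP ` A \<union> lineQ ` B"
    using packing by (auto simp: two_packing_def Clines_def S_def A_def B_def)
  then have "card R \<le> card (lineL ` S \<union> lineP ` A \<union> lineQ ` B)"
    by (intro card_mono) auto
  also have "\<dots> \<le> card (lineL ` S) + card (lineP ` A) + card (lineQ ` B)"
    by (meson add_mono card_Un_le le_trans order_refl)
  also have "\<dots> \<le> card S + card A + card B"
    by (intro add_mono card_image_le) auto
  finally have cR: "card R \<le> card S + card A + card B" .
  have cA: "card A \<le> 2"
    unfolding A_def using packing \<open>finite R\<close> inj_lineP by (rule two_packing_card_pencil_le[where x = PP]) simp
  have cB: "card B \<le> 2"
    unfolding B_def using packing \<open>finite R\<close> inj_lineQ by (rule two_packing_card_pencil_le[where x = QQ]) simp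
  have "S \<inter> (A + B - {0}) = {}"
    using two_packing_Clines_lineL_sum[OF packing]
    by (auto simp: S_def A_def B_def elim!: set_plus_elim)
  then have "card S + card (A + B - {0}) = card (S \<union> (A + B - {0}))"
    by (simp add: card_Un_disjoint)
  also have "\<dots> \<le> card (UNIV - {0::'a})"
    by (rule card_mono) (auto simp: S_def)
  finally have cS: "card S + card (A + B - {0}) \<le> card (UNIV :: 'a set) - 1"
    by (simp add: card_Diff_singleton)
  have "card A + card B \<le> card (A + B - {0}) + 2"
  proof (cases "A = {} \<or> B = {}")
    case False
    then have "card A + card B \<le> card (A + B) + 1"
      using cA cB no_two_torsion by (intro card_sumset_ge) auto
    moreover have "card (A + B) \<le> card (A + B - {0}) + 1"
      by (cases "0 \<in> A + B") (simp_all add: card_Suc_Diff1)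
    ultimately show ?thesis
      by linarith
  qed (use cA cB in auto)
  moreover have "card (UNIV :: 'a set) > 0"
    by (simp add: card_gt_0_iff)
  ultimately show ?thesis
    using cR cS by linarith
qed

lemma two_packing_Clines_lineL_lineQ:
  "two_packing (Clines :: ('a::{ab_group_add, finite}) pt set set) (lineL ` {g. g \<noteq> 0} \<union> {lineQ c, lineQ d})"
  (is "two_packing _ ?R")
proof -
  have "?R \<subseteq> Clines"
    by (auto simp: Clines_eq)
  moreover have "card {l \<in> ?R. x \<in> l} \<le> 2" for x
  proof -
    obtain l1 l2 where "{l \<in> ?R. x \<in> l} \<subseteq> {l1, l2}"
    proof (cases x)
      case (Pt a b)
      have "{l \<in> ?R. x \<in> l} \<subseteq> {lineL b, lineQ (b - a)}"
      proof
        fix l assume "l \<in> {l \<in> ?R. x \<in> l}"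
        then have "l \<in> ?R" "l \<in> {lineL b, lineP a, lineQ (b - a)}"
          using lines_through_Pt \<open>?R \<subseteq> Clines\<close> Pt by auto
        moreover have "l \<noteq> lineP a"
          using \<open>l \<in> ?R\<close> by auto
        ultimately show "l \<in> {lineL b, lineQ (b - a)}"
          by blast
      qed
      then show ?thesis
        by (rule that)
    next
      case PP
      then have "{l \<in> ?R. x \<in> l} \<subseteq> {lineQ c, lineQ d}"
        by auto
      then show ?thesis
        by (rule that)
    next
      case QQ
      then have "{l \<in> ?R. x \<in> l} \<subseteq> {lineQ c, lineQ d}"
        by auto
      then show ?thesis
        by (rule that)
    qed
    then have "card {l \<in> ?R. x \<in> l} \<le> card {l1, l2}"
      by (intro card_mono) auto
    also have "\<dots> \<le> 2"
      by (simp add: card_insert_if)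
    finally show ?thesis .
  qed
  moreover have "finite ?R"
    by simp
  ultimately show ?thesis
    using two_packing_iff_card_lines_through[of ?R Clines] by blast
qed

lemma card_lineL_lineQ:
  fixes c d :: "'a::{ab_group_add, finite}"
  assumes "c \<noteq> d"
  shows "card (lineL ` {g. g \<noteq> 0} \<union> {lineQ c, lineQ d}) = card (UNIV :: 'a set) + 1"
proof -
  have "card (lineL ` {g::'a. g \<noteq> 0}) = card {g::'a. g \<noteq> 0}"
    by (rule card_image) (rule inj_on_subset[OF inj_lineL subset_UNIV])
  also have "\<dots> = card (UNIV - {0::'a})"
    by (rule arg_cong[where f = card]) blast
  also have "\<dots> = card (UNIV :: 'a set) - 1"
    by (simp add: card_Diff_singleton)
  finally have "card (lineL ` {g::'a. g \<noteq> 0}) = card (UNIV :: 'a set) - 1" .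
  moreover have "card {lineQ c, lineQ d} = 2"
    using assms by (simp add: inj_eq[OF inj_lineQ])
  moreover have "card (lineL ` {g. g \<noteq> 0} \<union> {lineQ c, lineQ d})
      = card (lineL ` {g::'a. g \<noteq> 0}) + card {lineQ c, lineQ d}"
    by (rule card_Un_disjoint) auto
  moreover have "card (UNIV :: 'a set) > 0"
    by (simp add: card_gt_0_iff)
  ultimately show ?thesis
    by linarith
qed

theorem proposition3p2:
  fixes k :: nat and n :: nat
  assumes "k > 0"
    and "n = 2 * k + 1"
    and "card (UNIV :: ('a::{ab_group_add, finite}) set) = n"
    and "(\<Sum>g\<in>(UNIV::'a set). g) = 0"
    and "\<forall>g::'a. g \<noteq> 0 \<longrightarrow> g + g \<noteq> 0"
  shows "linear_system (Cpoints :: 'a pt set) Clines \<and> nu2 (Clines :: 'a pt set set) = n + 1"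
proof -
  have "\<exists>x::'a. x \<noteq> 0"
  proof (rule ccontr)
    assume "\<not> (\<exists>x::'a. x \<noteq> 0)"
    then have "(UNIV :: 'a set) = {0}"
      by auto
    then have "card (UNIV :: 'a set) = card {0 :: 'a}"
      by (rule arg_cong)
    with assms(1-3) show False
      by simp
  qed
  then obtain x :: 'a where "x \<noteq> 0"
    by blast
  then have "two_packing Clines (lineL ` {g. g \<noteq> 0} \<union> {lineQ 0, lineQ x})"
    "card (lineL ` {g. g \<noteq> 0} \<union> {lineQ 0, lineQ x}) = n + 1"
    using two_packing_Clines_lineL_lineQ card_lineL_lineQ[of 0 x] assms(3) by auto
  then have "nu2 (Clines :: 'a pt set set) = n + 1"
    using two_packing_Clines_card_le assms(3,5) by (intro nu2_eqI) (auto simp: Clines_eq)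
  then show ?thesis
    using linear_system_Cpoints_Clines by blast
qed

end
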